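(* Let $\omega=e^{2\pi i/3}$, $\Delta=\mathrm{diag}(1,0,-1)$, and \[ g(\lambda)=\frac{i}{\sqrt3}\,\lambda^{\Delta/3}\begin{pmatrix}1&\omega&\omega^2\\1&1&1\\1&\omega^2&\omega\end{pmatrix}. \] Then $\det g(\lambda)=1$, and if $\Psi$ satisfies $\partial_\lambda\Psi=L(\lambda;t_5,t_2,x)\Psi$ (with $L$ as in the context) and we set $\Psi=g\Phi$ and $\lambda=\xi^3$, then $\Phi=\Phi(\xi;t_5,t_2,x)$ satisfies $\partial_\xi\Phi=\mathcal L(\xi;t_5,t_2,x)\Phi$, where \[ \mathcal L(\xi)=3\begin{pmatrix}1&0&0\\0&\omega&0\\0&0&\omega^2\end{pmatrix}\xi^6+\sum_{k=0}^4\mathcal L_k\xi^k+\frac1\xi\cdot\frac{i}{\sqrt3}\begin{pmatrix}0&-1&1\\1&0&-1\\-1&1&0\end{pmatrix} \] for some matrices $\mathcal L_k$ independent of $\xi$.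
   Context: $E_{ij}$ are $3\times3$ matrix units and $Q_U,Q_V,Q_W,P_U,P_V,P_W,t_5,t_2,x$ are parameters. $L(\lambda)=E_{13}\lambda^2+\begin{pmatrix}0&2t_5+\frac14Q_U&-Q_V\\1&0&2t_5+\frac14Q_U\\0&1&0\end{pmatrix}\lambda+L_0$, where $L_0$ has rows $(\tfrac18Q_U^2-P_W+\tfrac12P_V-\tfrac14t_5Q_U-\tfrac16t_5^2,L_{12},L_{13})$, $(\tfrac12Q_V-\tfrac14Q_W,2P_W-\tfrac14Q_U^2+\tfrac12t_5Q_U+\tfrac13t_5^2,L_{23})$, $(t_5-\tfrac12Q_U,\tfrac12Q_V+\tfrac14Q_W,\tfrac18Q_U^2-P_W-\tfrac12P_V-\tfrac14t_5Q_U-\tfrac16t_5^2)$, with $L_{12}=\tfrac5{16}Q_UQ_W-P_U+\tfrac14t_5Q_W-\tfrac38Q_UQ_V-\tfrac12t_5Q_V+t_2$, $L_{13}=\tfrac1{16}Q_W^2+\tfrac7{32}Q_U^3+\tfrac34Q_V^2-\tfrac32P_WQ_U+\tfrac5{16}t_5Q_U^2-2t_5P_W+\tfrac14t_5^2Q_U+x+\tfrac8{27}t_5^3$, $L_{23}=-\tfrac5{16}Q_UQ_W+P_U-\tfrac14t_5Q_W-\tfrac38Q_UQ_V-\tfrac12t_5Q_V+t_2$. $\lambda^{\Delta/3}=\exp(\frac\Delta3\log\lambda)$. *)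

theory Defs
  imports "HOL-Analysis.Analysis"
begin

text \<open>Scalar multiple of a complex matrix (note: on vec types, * is componentwise,
  so the matrix product is **).\<close>
definition msc :: "complex \<Rightarrow> complex^'n^'m \<Rightarrow> complex^'n^'m" where
  "msc c A = (\<chi> i j. c * A $ i $ j)"

definition omega :: complex where
  "omega = exp (2 * of_real pi * \<i> / 3)"

definition Lmat ::
  "complex \<Rightarrow> complex \<Rightarrow> complex \<Rightarrow> complex \<Rightarrow> complex \<Rightarrow> complex \<Rightarrow>
   complex \<Rightarrow> complex \<Rightarrow> complex \<Rightarrow> complex \<Rightarrow> complex^3^3" where
  "Lmat QU QV QW PU PV PW t5 t2 x lam =
    (let L12 = 5/16*QU*QW - PU + 1/4*t5*QW - 3/8*QU*QV - 1/2*t5*QV + t2;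
         L13 = 1/16*QW^2 + 7/32*QU^3 + 3/4*QV^2 - 3/2*PW*QU + 5/16*t5*QU^2
               - 2*t5*PW + 1/4*t5^2*QU + x + 8/27*t5^3;
         L23 = -5/16*QU*QW + PU - 1/4*t5*QW - 3/8*QU*QV - 1/2*t5*QV + t2;
         E13 = vector [vector [0,0,1], vector [0,0,0], vector [0,0,0]] :: complex^3^3;
         A1 = vector [vector [0, 2*t5 + 1/4*QU, -QV],
                      vector [1, 0, 2*t5 + 1/4*QU],
                      vector [0, 1, 0]] :: complex^3^3;
         L0 = vector [vector [1/8*QU^2 - PW + 1/2*PV - 1/4*t5*QU - 1/6*t5^2, L12, L13],
                      vector [1/2*QV - 1/4*QW, 2*PW - 1/4*QU^2 + 1/2*t5*QU + 1/3*t5^2, L23],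
                      vector [t5 - 1/2*QU, 1/2*QV + 1/4*QW,
                              1/8*QU^2 - PW - 1/2*PV - 1/4*t5*QU - 1/6*t5^2]] :: complex^3^3
     in msc (lam^2) E13 + msc lam A1 + L0)"

text \<open>lambda^(Delta/3) = exp((Delta/3) log lambda) with Delta = diag(1,0,-1) and the
  principal logarithm Ln; for a diagonal matrix this is the diagonal matrix of exponentials.\<close>
definition lamDelta3 :: "complex \<Rightarrow> complex^3^3" where
  "lamDelta3 lam = vector [vector [exp (Ln lam / 3), 0, 0],
                           vector [0, 1, 0],
                           vector [0, 0, exp (- Ln lam / 3)]]"

definition gmat :: "complex \<Rightarrow> complex^3^3" where
  "gmat lam = msc (\<i> / of_real (sqrt 3))
     (lamDelta3 lam ** vector [vector [1, omega, omega^2],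
                               vector [1, 1, 1],
                               vector [1, omega^2, omega]])"

definition calL :: "complex^3^3 \<Rightarrow> complex^3^3 \<Rightarrow> complex^3^3 \<Rightarrow> complex^3^3 \<Rightarrow>
                    complex^3^3 \<Rightarrow> complex \<Rightarrow> complex^3^3" where
  "calL L0 L1 L2 L3 L4 xi =
     msc (3 * xi^6) (vector [vector [1,0,0], vector [0,omega,0], vector [0,0,omega^2]])
     + L0 + msc xi L1 + msc (xi^2) L2 + msc (xi^3) L3 + msc (xi^4) L4
     + msc (1/xi * (\<i> / of_real (sqrt 3)))
         (vector [vector [0,-1,1], vector [1,0,-1], vector [-1,1,0]])"

text \<open>The sector of the xi-plane on which lambda^(1/3) = exp(Ln(xi^3)/3) = xi,
  i.e. on which lambda^(Delta/3) = diag(xi,1,1/xi) for lambda = xi^3.\<close>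
definition sector :: "complex set" where
  "sector = {xi. xi \<noteq> 0 \<and> - (pi/3) < Arg xi \<and> Arg xi < pi/3}"

end

theory Submission
  imports Defs
begin

(* For lambda = xi^3 with xi in the sector, lambda^(Delta/3) = diag(xi, 1, 1/xi), so
   g(xi^3) = c D(xi) C, with c = i/sqrt 3, and its inverse -c S D(xi)^-1 (where S C = 3 I)
   are Laurent polynomials in xi.  Hence Phi = g^-1 Psi(xi^3) satisfies
   Phi' = (d(g^-1)/dxi g + 3 xi^2 g^-1 L g) Phi, and the bracket is a Laurent polynomial:
   conjugation by D(xi) turns the top part xi^6 E13 + xi^3 (E21 + E32) of L(xi^3) into xi^4
   times the cyclic shift, which C diagonalises to diag(1, omega, omega^2), while
   d(g^-1)/dxi g contributes the 1/xi term.  These identities, like det g = 1, are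
   computations in Q(omega) using omega^2 = -1 - omega. *)

lemma matrix_mult_msc: "A ** msc c B = msc c (A ** B)"
  by (simp add: vec_eq_iff matrix_matrix_mult_def msc_def sum_distrib_left algebra_simps)

lemma msc_matrix_mult: "msc c A ** B = msc c (A ** B)"
  by (simp add: vec_eq_iff matrix_matrix_mult_def msc_def sum_distrib_left algebra_simps)

lemma matrix_add_rdistrib: "(A + B) ** C = A ** C + B ** C"
  by (simp add: vec_eq_iff matrix_matrix_mult_def sum.distrib algebra_simps)

lemma has_field_derivative_matrix_mult:
  fixes H :: "'a::real_normed_field \<Rightarrow> 'a^'m^'n" and Y :: "'a \<Rightarrow> 'a^'k^'m"
  assumes "\<And>i k. ((\<lambda>z. H z $ i $ k) has_field_derivative H' $ i $ k) (at x within S)"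
    and "\<And>k j. ((\<lambda>z. Y z $ k $ j) has_field_derivative Y' $ k $ j) (at x within S)"
  shows "((\<lambda>z. (H z ** Y z) $ i $ j) has_field_derivative (H' ** Y x + H x ** Y') $ i $ j)
    (at x within S)"
proof -
  have "((\<lambda>z. \<Sum>k\<in>UNIV. H z $ i $ k * Y z $ k $ j) has_field_derivative
      (\<Sum>k\<in>UNIV. H x $ i $ k * Y' $ k $ j + H' $ i $ k * Y x $ k $ j)) (at x within S)"
    by (intro DERIV_sum DERIV_mult' assms)
  then show ?thesis
    by (simp add: matrix_matrix_mult_def sum.distrib add.commute)
qed

lemma gauge_transformation:
  fixes H :: "complex \<Rightarrow> complex^'n^'m" and Psi :: "complex \<Rightarrow> complex^'k^'n"
    and Phi :: "complex \<Rightarrow> complex^'k^'m"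
  assumes H: "\<And>i j. ((\<lambda>z. H z $ i $ j) has_field_derivative H' $ i $ j) (at xi)"
    and f: "(f has_field_derivative f') (at xi)"
    and Psi: "\<And>i j. ((\<lambda>z. Psi z $ i $ j) has_field_derivative (A ** Psi (f xi)) $ i $ j)
      (at (f xi))"
    and Phi: "eventually (\<lambda>z. Phi z = H z ** Psi (f z)) (nhds xi)"
    and gauge: "H' + msc f' (H xi ** A) = M ** H xi"
  shows "((\<lambda>z. Phi z $ i $ j) has_field_derivative (M ** Phi xi) $ i $ j) (at xi)"
proof -
  have "((\<lambda>z. Psi (f z) $ k $ j) has_field_derivative msc f' (A ** Psi (f xi)) $ k $ j) (at xi)"
    for k j
    using DERIV_chain2[OF Psi f] by (simp add: msc_def mult.commute)
  then have "((\<lambda>z. (H z ** Psi (f z)) $ i $ j) has_field_derivative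
      (H' ** Psi (f xi) + H xi ** msc f' (A ** Psi (f xi))) $ i $ j) (at xi)"
    by (rule has_field_derivative_matrix_mult[OF H])
  also have "H' ** Psi (f xi) + H xi ** msc f' (A ** Psi (f xi))
      = (H' + msc f' (H xi ** A)) ** Psi (f xi)"
    by (simp only: matrix_mult_msc msc_matrix_mult matrix_mul_assoc matrix_add_rdistrib)
  also have "\<dots> = M ** Phi xi"
    unfolding gauge using eventually_nhds_x_imp_x[OF Phi] by (simp add: matrix_mul_assoc)
  finally have "((\<lambda>z. (H z ** Psi (f z)) $ i $ j) has_field_derivative (M ** Phi xi) $ i $ j)
    (at xi)" .
  moreover have "eventually (\<lambda>z. Phi z $ i $ j = (H z ** Psi (f z)) $ i $ j) (nhds xi)"
    using Phi by eventually_elim simp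
  ultimately show ?thesis
    by (simp add: DERIV_cong_ev)
qed

lemma omega_eq: "omega = - 1/2 + \<i> * of_real (sqrt 3) / 2"
proof -
  have "omega = cis (2*pi/3)"
    unfolding omega_def cis_conv_exp by (simp add: field_simps)
  then show ?thesis
    by (simp add: cis.ctr cos_120 sin_120 complex_eq_iff)
qed

lemma complex_sqrt3_squared: "(of_real (sqrt 3) :: complex)^2 = 3"
  by (metis of_real_numeral of_real_power real_sqrt_pow2 zero_le_numeral)

lemma omega_squared: "omega^2 = - 1 - omega"
  unfolding omega_eq
  by (simp add: power2_eq_square field_simps complex_sqrt3_squared[unfolded power2_eq_square])

lemma i_div_sqrt3_eq: "\<i> / of_real (sqrt 3) = (2 * omega + 1) / 3"
  unfolding omega_eq using complex_sqrt3_squared by (simp add: field_simps power2_eq_square)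

lemma det_gmat: "det (gmat lam) = 1"
proof -
  have "exp (Ln lam / 3) * exp (- (Ln lam / 3)) = 1"
    by (simp add: exp_minus)
  then show ?thesis
    unfolding gmat_def lamDelta3_def msc_def i_div_sqrt3_eq
    apply (simp add: det_3 matrix_matrix_mult_def sum_3)
    using omega_squared by algebra
qed

lemma open_sector: "open sector"
proof -
  have "open (Arg -` {- (pi/3)<..<pi/3} \<inter> (- \<real>\<^sub>\<le>\<^sub>0))"
    using continuous_on_Arg by (simp add: continuous_on_open_vimage open_Compl)
  moreover have "sector = Arg -` {- (pi/3)<..<pi/3} \<inter> (- \<real>\<^sub>\<le>\<^sub>0)"
    by (auto simp: sector_def complex_nonpos_Reals_iff Arg_real complex_is_Real_iff
        complex_eq_iff)
  ultimately show ?thesis by simp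
qed

lemma Ln_cube_sector:
  assumes "z \<in> sector"
  shows "Ln (z^3) = 3 * Ln z"
proof -
  have z: "z \<noteq> 0" and "- (pi/3) < Arg z" "Arg z < pi/3"
    using assms by (auto simp: sector_def)
  then have "- pi < Im (3 * Ln z)" "Im (3 * Ln z) \<le> pi"
    by (simp_all add: Arg_eq_Im_Ln)
  then have "Ln (exp (3 * Ln z)) = 3 * Ln z"
    by (rule Ln_exp)
  moreover have "exp (3 * Ln z) = z^3"
    using z by (metis exp_Ln exp_of_nat_mult of_nat_numeral)
  ultimately show ?thesis by simp
qed

definition diag3 :: "complex \<Rightarrow> complex \<Rightarrow> complex \<Rightarrow> complex^3^3" where
  "diag3 a b c = vector [vector [a,0,0], vector [0,b,0], vector [0,0,c]]"

lemma lamDelta3_cube: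
  assumes "z \<in> sector"
  shows "lamDelta3 (z^3) = diag3 z 1 (1/z)"
proof -
  have "z \<noteq> 0" using assms by (simp add: sector_def)
  then show ?thesis
    by (simp add: lamDelta3_def diag3_def Ln_cube_sector[OF assms] exp_minus
        inverse_eq_divide)
qed

definition omega_matrix :: "complex^3^3" where
  "omega_matrix = vector [vector [1, omega, omega^2], vector [1,1,1], vector [1, omega^2, omega]]"

(* omega_matrix_adj ** omega_matrix = 3 * mat 1 *)
definition omega_matrix_adj :: "complex^3^3" where
  "omega_matrix_adj =
    vector [vector [1,1,1], vector [omega^2,1,omega], vector [omega,1,omega^2]]"

(* The inverse of gmat (z^3) for z in the sector, as a Laurent polynomial defined for all z. *)
definition gmat_cube_inv :: "complex \<Rightarrow> complex^3^3" where
  "gmat_cube_inv z = msc (- \<i> / of_real (sqrt 3)) (omega_matrix_adj ** diag3 (1/z) 1 z)"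

definition gmat_cube_inv_deriv :: "complex \<Rightarrow> complex^3^3" where
  "gmat_cube_inv_deriv z =
    msc (- \<i> / of_real (sqrt 3)) (omega_matrix_adj ** diag3 (- 1/z^2) 0 1)"

lemma gmat_cube_inv_mult:
  assumes "z \<in> sector"
  shows "gmat_cube_inv z ** gmat (z^3) = mat 1"
proof -
  have z: "z \<noteq> 0" using assms by (simp add: sector_def)
  show ?thesis
    unfolding vec_eq_iff forall_3 gmat_def lamDelta3_cube[OF assms]
    apply (simp add: gmat_cube_inv_def msc_def diag3_def omega_matrix_adj_def mat_def
        matrix_matrix_mult_def sum_3 i_div_sqrt3_eq)
    apply (simp add: field_simps z)
    using omega_squared by algebra
qed

lemma has_field_derivative_gmat_cube_inv:
  assumes "z \<noteq> 0"
  shows "((\<lambda>w. gmat_cube_inv w $ i $ k) has_field_derivative gmat_cube_inv_deriv z $ i $ k) (at z)"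
proof -
  \<comment> \<open>with the scalar kept abstract, field_simps cannot disturb the constant i/sqrt 3\<close>
  have "((\<lambda>w. msc c (omega_matrix_adj ** diag3 (1/w) 1 w) $ i $ k) has_field_derivative
      msc c (omega_matrix_adj ** diag3 (- 1/z^2) 0 1) $ i $ k) (at z)" for c
  proof -
    have "i = 1 \<or> i = 2 \<or> i = 3" "k = 1 \<or> k = 2 \<or> k = 3" using exhaust_3 by auto
    then show ?thesis using assms
      by (auto simp: msc_def diag3_def matrix_matrix_mult_def sum_3 field_simps power2_eq_square
          intro!: derivative_eq_intros)
  qed
  then show ?thesis
    unfolding gmat_cube_inv_def gmat_cube_inv_deriv_def .
qed

definition E13 :: "complex^3^3" where
  "E13 = vector [vector [0,0,1], vector [0,0,0], vector [0,0,0]]"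

definition A1 :: "complex \<Rightarrow> complex \<Rightarrow> complex^3^3" where
  "A1 a b = vector [vector [0,a,b], vector [1,0,a], vector [0,1,0]]"

lemma Lmat_decompose:
  "Lmat QU QV QW PU PV PW t5 t2 x lam
     = msc (lam^2) E13 + msc lam (A1 (2*t5 + 1/4*QU) (- QV)) + Lmat QU QV QW PU PV PW t5 t2 x 0"
  by (simp add: Lmat_def Let_def msc_def E13_def A1_def vec_eq_iff forall_3)

(* Conjugation by diag(1/xi, 1, xi) multiplies entry (i, j) by xi^(i - j), so in
   3 xi^2 gmat_cube_inv xi ** L(xi^3) ** gmat (xi^3) the coefficient of lambda^m in entry (i, j)
   lands in degree 3 m + 2 + i - j; calL_coeff k collects the entries of degree k. *)
definition calL_coeff :: "nat \<Rightarrow> complex \<Rightarrow> complex \<Rightarrow> complex^3^3 \<Rightarrow> complex^3^3" where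
  "calL_coeff k a b B = omega_matrix_adj **
     (if k = 0 then vector [vector [0,0,B$1$3], vector [0,0,0], vector [0,0,0]]
      else if k = 1 then vector [vector [0,B$1$2,0], vector [0,0,B$2$3], vector [0,0,0]]
      else if k = 2 then vector [vector [B$1$1,0,0], vector [0,B$2$2,0], vector [0,0,B$3$3]]
      else if k = 3 then vector [vector [0,0,b], vector [B$2$1,0,0], vector [0,B$3$2,0]]
      else vector [vector [0,a,0], vector [0,0,a], vector [B$3$1,0,0]] :: complex^3^3)
     ** omega_matrix"

lemma gauge_identity:
  assumes "z \<noteq> 0"
  shows "gmat_cube_inv_deriv z
      + msc (3 * z^2) (gmat_cube_inv z ** (msc ((z^3)^2) E13 + msc (z^3) (A1 a b) + B))
    = calL (calL_coeff 0 a b B) (calL_coeff 1 a b B) (calL_coeff 2 a b B) (calL_coeff 3 a b B)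
        (calL_coeff 4 a b B) z ** gmat_cube_inv z"
  unfolding vec_eq_iff forall_3
  apply (simp add: gmat_cube_inv_deriv_def gmat_cube_inv_def calL_def calL_coeff_def msc_def
      diag3_def omega_matrix_adj_def omega_matrix_def E13_def A1_def matrix_matrix_mult_def sum_3
      i_div_sqrt3_eq)
  apply (simp add: field_simps assms)
  using omega_squared by algebra+

lemma cube_gauge_solution:
  fixes Psi Phi :: "complex \<Rightarrow> complex^'k^3"
  assumes L: "\<And>lam. L lam = msc (lam^2) E13 + msc lam (A1 a b) + B"
    and U: "open U"
    and Psi: "\<forall>lam\<in>U. \<forall>i j. ((\<lambda>z. Psi z $ i $ j) has_field_derivative (L lam ** Psi lam) $ i $ j)
      (at lam)"
    and Phi: "\<forall>zeta\<in>sector. zeta^3 \<in> U \<longrightarrow> Psi (zeta^3) = gmat (zeta^3) ** Phi zeta"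
    and xi: "xi \<in> sector" "xi^3 \<in> U"
  shows "((\<lambda>z. Phi z $ i $ j) has_field_derivative
    (calL (calL_coeff 0 a b B) (calL_coeff 1 a b B) (calL_coeff 2 a b B) (calL_coeff 3 a b B)
      (calL_coeff 4 a b B) xi ** Phi xi) $ i $ j) (at xi)"
proof (rule gauge_transformation)
  have xi0: "xi \<noteq> 0"
    using xi by (simp add: sector_def)
  show "((\<lambda>z. gmat_cube_inv z $ i $ j) has_field_derivative gmat_cube_inv_deriv xi $ i $ j) (at xi)"
    for i j
    using xi0 by (rule has_field_derivative_gmat_cube_inv)
  show "((\<lambda>z. z^3) has_field_derivative 3 * xi^2) (at xi)"
    by (rule derivative_eq_intros refl | simp)+
  show "((\<lambda>z. Psi z $ i $ j) has_field_derivative (L (xi^3) ** Psi (xi^3)) $ i $ j) (at (xi^3))"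
    for i j
    using Psi xi by blast
  have "open (sector \<inter> (\<lambda>z. z^3) -` U)"
    by (intro open_Int open_sector continuous_open_vimage U continuous_intros)
  then have "eventually (\<lambda>z. z \<in> sector \<and> z^3 \<in> U) (nhds xi)"
    using eventually_nhds_in_open xi by fastforce
  then show "eventually (\<lambda>z. Phi z = gmat_cube_inv z ** Psi (z^3)) (nhds xi)"
    by eventually_elim (metis Phi gmat_cube_inv_mult matrix_mul_assoc matrix_mul_lid)
  show "gmat_cube_inv_deriv xi + msc (3 * xi^2) (gmat_cube_inv xi ** L (xi^3))
    = calL (calL_coeff 0 a b B) (calL_coeff 1 a b B) (calL_coeff 2 a b B) (calL_coeff 3 a b B)
        (calL_coeff 4 a b B) xi ** gmat_cube_inv xi"
    unfolding L using xi0 by (rule gauge_identity)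
qed

theorem mainTheorem7:
  fixes QU QV QW PU PV PW t5 t2 x :: complex
  shows "(\<forall>lam. lam \<noteq> 0 \<longrightarrow> det (gmat lam) = 1) \<and>
    (\<exists>L0 L1 L2 L3 L4 :: complex^3^3.
      \<forall>(U :: complex set) (Psi :: complex \<Rightarrow> complex^'k^3) (Phi :: complex \<Rightarrow> complex^'k^3) xi.
        open U \<and>
        (\<forall>lam\<in>U. \<forall>i j. ((\<lambda>z. Psi z $ i $ j) has_field_derivative
                   (Lmat QU QV QW PU PV PW t5 t2 x lam ** Psi lam) $ i $ j) (at lam)) \<and>
        (\<forall>zeta\<in>sector. zeta^3 \<in> U \<longrightarrow> Psi (zeta^3) = gmat (zeta^3) ** Phi zeta) \<and>
        xi \<in> sector \<and> xi^3 \<in> U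
        \<longrightarrow> (\<forall>i j. ((\<lambda>z. Phi z $ i $ j) has_field_derivative
                   (calL L0 L1 L2 L3 L4 xi ** Phi xi) $ i $ j) (at xi)))"
proof -
  let ?c = "\<lambda>k. calL_coeff k (2*t5 + 1/4*QU) (- QV) (Lmat QU QV QW PU PV PW t5 t2 x 0)"
  show ?thesis
    using det_gmat cube_gauge_solution[OF Lmat_decompose]
    by (intro conjI allI impI exI[of _ "?c 0"] exI[of _ "?c 1"] exI[of _ "?c 2"]
        exI[of _ "?c 3"] exI[of _ "?c 4"]) blast+
qed

end
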